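(* Let $a>0$, $L>0$, $k>0$ and fix $t$. Let $\bar u$, $u(t,\cdot)$ be functions on $[0,L]$ with $u_x(t,\cdot),u_t(t,\cdot)\in L^2(0,L)$ such that $0\le \bar u+u\le \frac a2$ on $[0,L]$. Assume $k$ is large enough that $$M_1:=\min\Big\{\tfrac34 k a^2-a-1,\ k-1\Big\}>0,$$ and define $K_1=\frac{1+2L^2}{M_1}$ and $K_2=\max\{k a^2+a+1,\ k+1\}$. Let $$E_1(t)=\int_0^L k\Big[\big(a^2-(\bar u+u)^2\big)u_x^2+u_t^2\Big]-2\exp\Big(-\tfrac xL\Big)\Big[(\bar u+u)u_x^2+u_tu_x\Big]dx.$$ Then $$M_1\int_0^L(u_t^2+u_x^2)\,dx\le E_1(t)\le K_2\int_0^L(u_t^2+u_x^2)\,dx,$$ and $$\int_0^L\big(u_t^2+(1+2L^2)u_x^2\big)\,dx\le K_1E_1(t).$$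
   Context: Here $u_t,u_x$ denote the partial derivatives of $u(t,x)$ evaluated at the fixed time $t$. *)

theory Defs
  imports "HOL-Analysis.Analysis"
begin

definition L2_on :: "real set \<Rightarrow> (real \<Rightarrow> real) \<Rightarrow> bool" where
  "L2_on S f \<longleftrightarrow> f \<in> borel_measurable (lebesgue_on S) \<and>
                  integrable (lebesgue_on S) (\<lambda>x. (f x)^2)"

text \<open>The energy E_1(t); w = ubar + u(t,.), ux = u_x(t,.), ut = u_t(t,.).\<close>
definition E1 :: "real \<Rightarrow> real \<Rightarrow> real \<Rightarrow> (real \<Rightarrow> real) \<Rightarrow> (real \<Rightarrow> real) \<Rightarrow> (real \<Rightarrow> real) \<Rightarrow> real" where
  "E1 k a L w ux ut = (LINT x|lebesgue_on {0..L}.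
      k * ((a^2 - (w x)^2) * (ux x)^2 + (ut x)^2)
      - 2 * exp (- x / L) * (w x * (ux x)^2 + ut x * ux x))"

definition M1 :: "real \<Rightarrow> real \<Rightarrow> real" where
  "M1 k a = min (3/4 * k * a^2 - a - 1) (k - 1)"

definition K1 :: "real \<Rightarrow> real \<Rightarrow> real \<Rightarrow> real" where
  "K1 k a L = (1 + 2 * L^2) / M1 k a"

definition K2 :: "real \<Rightarrow> real \<Rightarrow> real" where
  "K2 k a = max (k * a^2 + a + 1) (k + 1)"

end

theory Submission imports Defs begin

text \<open>Since the weight
  \<open>exp (-x/L)\<close> lies in \<open>(0, 1]\<close> and \<open>0 \<le> w \<le> a/2\<close>, the term \<open>2 e w u\<^sub>x\<^sup>2\<close> costs at most
  \<open>a u\<^sub>x\<^sup>2\<close> and the cross term \<open>2 e u\<^sub>t u\<^sub>x\<close> at most \<open>u\<^sub>t\<^sup>2 + u\<^sub>x\<^sup>2\<close>, while \<open>a\<^sup>2 - w\<^sup>2 \<ge> 3a\<^sup>2/4\<close>.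
  This gives the two-sided bound pointwise; integrating it yields the first two
  estimates, and the third follows from the first since \<open>1 + 2L\<^sup>2 \<ge> 1\<close>.\<close>

lemma two_abs_mult_le_sum_squares:
  fixes p q :: real
  shows "2 * \<bar>q * p\<bar> \<le> q\<^sup>2 + p\<^sup>2"
proof -
  have "0 \<le> (\<bar>q\<bar> - \<bar>p\<bar>)\<^sup>2" by simp
  then show ?thesis by (simp add: power2_eq_square abs_mult algebra_simps)
qed

lemma energy_density_bounds:
  fixes a k w e p q :: real
  assumes "a > 0" "k > 0" "0 \<le> w" "w \<le> a / 2" "0 < e" "e \<le> 1"
  shows "(3/4 * k * a\<^sup>2 - a - 1) * p\<^sup>2 + (k - 1) * q\<^sup>2
           \<le> k * ((a\<^sup>2 - w\<^sup>2) * p\<^sup>2 + q\<^sup>2) - 2 * e * (w * p\<^sup>2 + q * p)"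
    and "k * ((a\<^sup>2 - w\<^sup>2) * p\<^sup>2 + q\<^sup>2) - 2 * e * (w * p\<^sup>2 + q * p)
           \<le> (k * a\<^sup>2 + 1) * p\<^sup>2 + (k + 1) * q\<^sup>2"
proof -
  have "w\<^sup>2 \<le> (a / 2)\<^sup>2" using assms by (intro power_mono) auto
  then have coeff_lower: "k * (3/4 * a\<^sup>2) * p\<^sup>2 \<le> k * (a\<^sup>2 - w\<^sup>2) * p\<^sup>2"
    using assms by (intro mult_right_mono mult_left_mono) (auto simp: power_divide)
  have coeff_upper: "k * (a\<^sup>2 - w\<^sup>2) * p\<^sup>2 \<le> k * a\<^sup>2 * p\<^sup>2"
    using assms by (intro mult_right_mono mult_left_mono) auto
  have "e * w \<le> a / 2" using mult_mono[of e 1 w "a / 2"] assms by simp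
  then have weight_w: "e * w * p\<^sup>2 \<le> a / 2 * p\<^sup>2" "0 \<le> e * w * p\<^sup>2"
    using assms by (intro mult_right_mono, simp_all)
  have "\<bar>e * (q * p)\<bar> \<le> \<bar>q * p\<bar>" using assms by (simp add: abs_mult mult_left_le_one_le)
  then have cross: "\<bar>2 * e * (q * p)\<bar> \<le> q\<^sup>2 + p\<^sup>2"
    using two_abs_mult_le_sum_squares[of q p] by (simp add: abs_mult)
  show "(3/4 * k * a\<^sup>2 - a - 1) * p\<^sup>2 + (k - 1) * q\<^sup>2
          \<le> k * ((a\<^sup>2 - w\<^sup>2) * p\<^sup>2 + q\<^sup>2) - 2 * e * (w * p\<^sup>2 + q * p)"
    using coeff_lower weight_w cross by (simp add: algebra_simps abs_le_iff)
  show "k * ((a\<^sup>2 - w\<^sup>2) * p\<^sup>2 + q\<^sup>2) - 2 * e * (w * p\<^sup>2 + q * p)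
          \<le> (k * a\<^sup>2 + 1) * p\<^sup>2 + (k + 1) * q\<^sup>2"
    using coeff_upper weight_w cross by (simp add: algebra_simps abs_le_iff)
qed

lemma energy_density_M1_K2_bounds:
  fixes a k w e p q :: real
  assumes "a > 0" "k > 0" "0 \<le> w" "w \<le> a / 2" "0 < e" "e \<le> 1"
  defines "f \<equiv> k * ((a\<^sup>2 - w\<^sup>2) * p\<^sup>2 + q\<^sup>2) - 2 * e * (w * p\<^sup>2 + q * p)"
  shows "M1 k a * (q\<^sup>2 + p\<^sup>2) \<le> f" and "f \<le> K2 k a * (q\<^sup>2 + p\<^sup>2)"
proof -
  note density = energy_density_bounds[OF assms(1-6), of p q, folded f_def]
  have "M1 k a * p\<^sup>2 \<le> (3/4 * k * a\<^sup>2 - a - 1) * p\<^sup>2" "M1 k a * q\<^sup>2 \<le> (k - 1) * q\<^sup>2"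
    unfolding M1_def by (auto intro: mult_right_mono)
  then have "M1 k a * (q\<^sup>2 + p\<^sup>2) \<le> (3/4 * k * a\<^sup>2 - a - 1) * p\<^sup>2 + (k - 1) * q\<^sup>2"
    by (simp add: distrib_left)
  then show "M1 k a * (q\<^sup>2 + p\<^sup>2) \<le> f" using density(1) by linarith
  have "(k * a\<^sup>2 + 1) * p\<^sup>2 \<le> K2 k a * p\<^sup>2" "(k + 1) * q\<^sup>2 \<le> K2 k a * q\<^sup>2"
    unfolding K2_def using assms(1) by (auto intro: mult_right_mono)
  then have "(k * a\<^sup>2 + 1) * p\<^sup>2 + (k + 1) * q\<^sup>2 \<le> K2 k a * (q\<^sup>2 + p\<^sup>2)"
    by (simp add: distrib_left)
  then show "f \<le> K2 k a * (q\<^sup>2 + p\<^sup>2)" using density(2) by linarith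
qed

lemma integral_between_multiples:
  fixes f g :: "'a \<Rightarrow> real"
  assumes "integrable M g" "f \<in> borel_measurable M"
    and "\<And>x. x \<in> space M \<Longrightarrow> c * g x \<le> f x \<and> f x \<le> C * g x"
  shows "integrable M f"
    and "c * integral\<^sup>L M g \<le> integral\<^sup>L M f"
    and "integral\<^sup>L M f \<le> C * integral\<^sup>L M g"
proof -
  show f_int: "integrable M f"
  proof (rule Bochner_Integration.integrable_bound[OF _ assms(2)])
    show "integrable M (\<lambda>x. \<bar>c * g x\<bar> + \<bar>C * g x\<bar>)" using assms(1) by simp
    show "AE x in M. norm (f x) \<le> norm (\<bar>c * g x\<bar> + \<bar>C * g x\<bar>)"
      using assms(3) by (intro AE_I2) force
  qed
  show "c * integral\<^sup>L M g \<le> integral\<^sup>L M f"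
    using integral_mono[of M "\<lambda>x. c * g x" f] assms f_int by simp
  show "integral\<^sup>L M f \<le> C * integral\<^sup>L M g"
    using integral_mono[of M f "\<lambda>x. C * g x"] assms f_int by simp
qed

theorem lemma1:
  fixes a L k t :: real
    and ubar :: "real \<Rightarrow> real"
    and u ux ut :: "real \<Rightarrow> real \<Rightarrow> real"
  assumes "a > 0" "L > 0" "k > 0"
    and "(\<lambda>x. ubar x + u t x) \<in> borel_measurable (lebesgue_on {0..L})"
    and "L2_on {0..L} (ux t)" "L2_on {0..L} (ut t)"
    and "\<forall>x\<in>{0..L}. 0 \<le> ubar x + u t x \<and> ubar x + u t x \<le> a / 2"
    and "M1 k a > 0"
  shows "M1 k a * (LINT x|lebesgue_on {0..L}. (ut t x)^2 + (ux t x)^2)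
           \<le> E1 k a L (\<lambda>x. ubar x + u t x) (ux t) (ut t)
       \<and> E1 k a L (\<lambda>x. ubar x + u t x) (ux t) (ut t)
           \<le> K2 k a * (LINT x|lebesgue_on {0..L}. (ut t x)^2 + (ux t x)^2)
       \<and> (LINT x|lebesgue_on {0..L}. (ut t x)^2 + (1 + 2 * L^2) * (ux t x)^2)
           \<le> K1 k a L * E1 k a L (\<lambda>x. ubar x + u t x) (ux t) (ut t)"
proof -
  define M where "M = lebesgue_on {0..L}"
  define w where "w = (\<lambda>x. ubar x + u t x)"
  define p where "p = ux t"
  define q where "q = ut t"
  define f where "f = (\<lambda>x. k * ((a\<^sup>2 - (w x)\<^sup>2) * (p x)\<^sup>2 + (q x)\<^sup>2)
      - 2 * exp (- x / L) * (w x * (p x)\<^sup>2 + q x * p x))"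
  define g where "g = (\<lambda>x. (q x)\<^sup>2 + (p x)\<^sup>2)"
  define c where "c = 1 + 2 * L\<^sup>2"
  have p_L2: "p \<in> borel_measurable M" "integrable M (\<lambda>x. (p x)\<^sup>2)"
    and q_L2: "q \<in> borel_measurable M" "integrable M (\<lambda>x. (q x)\<^sup>2)"
    using assms(5,6) by (auto simp: L2_on_def p_def q_def M_def)
  then have g_int: "integrable M g" by (simp add: g_def)
  have "(\<lambda>x. exp (- x / L)) \<in> borel_measurable M"
    unfolding M_def by (intro continuous_imp_measurable_on_sets_lebesgue)
      (use assms(2) in \<open>auto intro!: continuous_intros\<close>)
  then have f_meas: "f \<in> borel_measurable M"
    using assms(4) p_L2 q_L2 unfolding f_def w_def M_def by measurable
  have "M1 k a * g x \<le> f x \<and> f x \<le> K2 k a * g x" if "x \<in> space M" for x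
  proof -
    have "0 \<le> w x" "w x \<le> a / 2" "exp (- x / L) \<le> 1"
      using assms(2,7) that by (auto simp: w_def M_def)
    from energy_density_M1_K2_bounds[OF assms(1,3) this(1,2) exp_gt_zero this(3)]
    show ?thesis by (simp add: f_def g_def)
  qed
  note E_bounds = integral_between_multiples[OF g_int f_meas this]
  have "integral\<^sup>L M (\<lambda>x. (q x)\<^sup>2 + c * (p x)\<^sup>2) \<le> integral\<^sup>L M (\<lambda>x. c * g x)"
    using p_L2 q_L2 g_int
    by (intro integral_mono) (auto simp: g_def c_def distrib_left intro: mult_le_cancel_right1[THEN iffD2])
  also have "\<dots> = (c / M1 k a) * (M1 k a * integral\<^sup>L M g)" using assms(8) by simp
  also have "\<dots> \<le> (c / M1 k a) * integral\<^sup>L M f"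
    using E_bounds(2) assms(8) by (intro mult_left_mono) (auto simp: c_def)
  finally show ?thesis
    using E_bounds(2,3) unfolding E1_def K1_def c_def f_def g_def M_def w_def p_def q_def by simp
qed

end
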